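(* Let $(X,d)$ be a path-connected compact metric space, $x_0\in X$, $n\geq1$. Then the topology on $\pi_n(X,x_0)$ induced by the pseudometric $\rho$ is at least as fine as the shape topology on $\pi_n(X,x_0)$.
   Context: $\Omega^n(X,x_0)$ is the set of continuous maps $\alpha:[0,1]^n\to X$ with $\alpha(\partial[0,1]^n)=\{x_0\}$, with uniform metric $\mu(\alpha,\beta)=\sup_t d(\alpha(t),\beta(t))$, and $\rho(a,b)=\inf\{\mu(\alpha,\beta)\mid\alpha\in a,\beta\in b\}$. Shape topology: let $\mathrm{cov}(X)$ be the set of pairs $(\mathscr{U},U_0)$, $\mathscr{U}$ a locally finite open cover of $X$ and $U_0\in\mathscr{U}$ containing $x_0$. Let $|N(\mathscr{U})|$ be the geometric realization of the nerve of $\mathscr{U}$. A partition of unity $\{\phi_U\}$ subordinate to $\mathscr{U}$ with $\phi_{U_0}(x_0)=1$ gives a canonical map $p_{\mathscr{U}}:(X,x_0)\to(|N(\mathscr{U})|,U_0)$ with barycentric coordinates $\phi_U(x)$. The shape topology is the group topology on $\pi_n(X,x_0)$ having the subgroups $\ker(p_{\mathscr{U}\#}:\pi_n(X,x_0)\to\pi_n(|N(\mathscr{U})|,U_0))$, $(\mathscr{U},U_0)\in\mathrm{cov}(X)$, as a neighborhood base of the identity (equivalently the initial topology with respect to the canonical homomorphism to the shape homotopy group $\varprojlim\pi_n(|N(\mathscr{U})|,U_0)$ of discrete groups). *)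

theory Defs
  imports "HOL-Analysis.Analysis"
begin

definition ucube :: "(real^'n) set" where
  "ucube = cbox 0 1"

definition ucube_bd :: "(real^'n) set" where
  "ucube_bd = cbox 0 1 - box 0 1"

text \<open>As HOL functions are total, we normalise maps to take the value x0 outside
  the open cube (i.e. on the boundary and outside the cube).\<close>
definition Omega_n :: "'a topology \<Rightarrow> 'a \<Rightarrow> (real^'n \<Rightarrow> 'a) set" where
  "Omega_n X x0 = {\<alpha>. continuous_map (top_of_set ucube) X \<alpha> \<and>
                        (\<forall>t. t \<notin> box 0 1 \<longrightarrow> \<alpha> t = x0)}"

definition hrel :: "'a topology \<Rightarrow> 'a \<Rightarrow> (real^'n \<Rightarrow> 'a) \<Rightarrow> (real^'n \<Rightarrow> 'a) \<Rightarrow> bool" where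
  "hrel X x0 \<alpha> \<beta> =
     homotopic_with (\<lambda>h. \<forall>t\<in>ucube_bd. h t = x0) (top_of_set ucube) X \<alpha> \<beta>"

definition hclass :: "'a topology \<Rightarrow> 'a \<Rightarrow> (real^'n \<Rightarrow> 'a) \<Rightarrow> (real^'n \<Rightarrow> 'a) set" where
  "hclass X x0 \<alpha> = {\<beta> \<in> Omega_n X x0. hrel X x0 \<alpha> \<beta>}"

definition homotopy_group :: "'a topology \<Rightarrow> 'a \<Rightarrow> (real^'n \<Rightarrow> 'a) set set" where
  "homotopy_group X x0 = hclass X x0 ` Omega_n X x0"

definition induced_hom :: "('a \<Rightarrow> 'b) \<Rightarrow> 'b topology \<Rightarrow> 'b \<Rightarrow>
      (real^'n \<Rightarrow> 'a) set \<Rightarrow> (real^'n \<Rightarrow> 'b) set" where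
  "induced_hom f Y y0 a = hclass Y y0 (f \<circ> (SOME \<alpha>. \<alpha> \<in> a))"

definition umetric :: "(real^'n \<Rightarrow> 'a::metric_space) \<Rightarrow> (real^'n \<Rightarrow> 'a) \<Rightarrow> real" where
  "umetric \<alpha> \<beta> = Sup ((\<lambda>t. dist (\<alpha> t) (\<beta> t)) ` ucube)"

definition rho :: "(real^'n \<Rightarrow> 'a::metric_space) set \<Rightarrow> (real^'n \<Rightarrow> 'a) set \<Rightarrow> real" where
  "rho a b = Inf {umetric \<alpha> \<beta> | \<alpha> \<beta>. \<alpha> \<in> a \<and> \<beta> \<in> b}"

definition rho_open :: "'a::metric_space set \<Rightarrow> 'a \<Rightarrow> (real^'n \<Rightarrow> 'a) set set \<Rightarrow> bool" where
  "rho_open S x0 A \<longleftrightarrow> A \<subseteq> homotopy_group (top_of_set S) x0 \<and>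
     (\<forall>a\<in>A. \<exists>e>0. \<forall>b\<in>homotopy_group (top_of_set S) x0. rho a b < e \<longrightarrow> b \<in> A)"

definition lf_open_cover :: "'a topology \<Rightarrow> 'a set set \<Rightarrow> bool" where
  "lf_open_cover X \<U> \<longleftrightarrow> (\<forall>U\<in>\<U>. openin X U) \<and> \<Union>\<U> = topspace X \<and> locally_finite_in X \<U>"

definition pou_subordinate :: "'a topology \<Rightarrow> 'a set set \<Rightarrow> 'a set \<Rightarrow> 'a \<Rightarrow> ('a set \<Rightarrow> 'a \<Rightarrow> real) \<Rightarrow> bool" where
  "pou_subordinate X \<U> U0 x0 \<phi> \<longleftrightarrow>
     (\<forall>U\<in>\<U>. continuous_map X euclideanreal (\<phi> U) \<and>
              (\<forall>x\<in>topspace X. 0 \<le> \<phi> U x) \<and>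
              X closure_of {x \<in> topspace X. \<phi> U x \<noteq> 0} \<subseteq> U) \<and>
     (\<forall>U. U \<notin> \<U> \<longrightarrow> (\<forall>x\<in>topspace X. \<phi> U x = 0)) \<and>
     (\<forall>x\<in>topspace X. finite {U \<in> \<U>. \<phi> U x \<noteq> 0} \<and>
                      (\<Sum>U \<in> {U \<in> \<U>. \<phi> U x \<noteq> 0}. \<phi> U x) = 1) \<and>
     \<phi> U0 x0 = 1"

text \<open>Geometric realization |N(U)| of the nerve, as a set of barycentric
  coordinate functions (finite support, simplex = members with nonempty
  intersection), with the topology induced from the product topology.\<close>
definition nerve_realization :: "'a set set \<Rightarrow> ('a set \<Rightarrow> real) set" where
  "nerve_realization \<U> = {f. (\<forall>U. 0 \<le> f U) \<and> (\<forall>U. f U \<noteq> 0 \<longrightarrow> U \<in> \<U>) \<and>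
      finite {U. f U \<noteq> 0} \<and> sum f {U. f U \<noteq> 0} = 1 \<and> \<Inter>{U. f U \<noteq> 0} \<noteq> {}}"

definition nerve_top :: "'a set set \<Rightarrow> ('a set \<Rightarrow> real) topology" where
  "nerve_top \<U> = subtopology euclidean (nerve_realization \<U>)"

definition nerve_vertex :: "'a set \<Rightarrow> ('a set \<Rightarrow> real)" where
  "nerve_vertex U0 = (\<lambda>U. if U = U0 then 1 else 0)"

definition canonical_map :: "('a set \<Rightarrow> 'a \<Rightarrow> real) \<Rightarrow> 'a \<Rightarrow> ('a set \<Rightarrow> real)" where
  "canonical_map \<phi> = (\<lambda>x U. \<phi> U x)"

text \<open>Shape topology: initial topology on pi_n(X,x0) w.r.t. all maps
  (p_U)_# : pi_n(X,x0) \<rightarrow> pi_n(|N(U)|,U0) with discrete targets, i.e. generated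
  by the fibres of these maps (the cosets of the kernels).\<close>
definition shape_top :: "'a topology \<Rightarrow> 'a \<Rightarrow> (real^'n \<Rightarrow> 'a) set topology" where
  "shape_top X x0 = topology_generated_by
     {{b \<in> homotopy_group X x0.
         induced_hom (canonical_map \<phi>) (nerve_top \<U>) (nerve_vertex U0) b =
         induced_hom (canonical_map \<phi>) (nerve_top \<U>) (nerve_vertex U0) a}
      | \<U> U0 \<phi> a. lf_open_cover X \<U> \<and> U0 \<in> \<U> \<and> x0 \<in> U0 \<and>
                  pou_subordinate X \<U> U0 x0 \<phi> \<and> a \<in> homotopy_group X x0}"

end

theory Submission
  imports Defs
begin

(* The basic open sets of the shape topology are the fibres of the induced maps (p_U)_#.
   For a fixed cover U, compactness gives a Lebesgue number delta for the supports of the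
   partition of unity: if d(y,z) < delta, then all U with phi_U(y) > 0 or phi_U(z) > 0 have
   a common point, so the segment from p_U(y) to p_U(z) lies in a simplex of |N(U)|.
   If rho(a,b) < delta, then a and b have representatives at uniform distance < delta,
   and the straight-line homotopy between their images in |N(U)| gives
   (p_U)_# a = (p_U)_# b. Hence every fibre is rho-open, and so is every shape-open set. *)

lemma pou_nonneg:
  assumes "pou_subordinate (top_of_set S) \<U> U0 x0 \<phi>" and "y \<in> S"
  shows "0 \<le> \<phi> U y"
  using assms unfolding pou_subordinate_def by (cases "U \<in> \<U>") auto

lemma pou_nonzero_imp_member:
  assumes pou: "pou_subordinate (top_of_set S) \<U> U0 x0 \<phi>" and "y \<in> S" and "\<phi> U y \<noteq> 0"
  shows "U \<in> \<U>" and "y \<in> U"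
proof -
  show U: "U \<in> \<U>"
    using assms unfolding pou_subordinate_def by auto
  have "y \<in> top_of_set S closure_of {x \<in> topspace (top_of_set S). \<phi> U x \<noteq> 0}"
    using assms(2,3) by (intro closure_of_subset[THEN subsetD]) auto
  with U pou show "y \<in> U"
    unfolding pou_subordinate_def by blast
qed

lemma pou_finite_support_sum:
  assumes pou: "pou_subordinate (top_of_set S) \<U> U0 x0 \<phi>" and "y \<in> S"
  shows "finite {U. \<phi> U y \<noteq> 0}" and "(\<Sum>U | \<phi> U y \<noteq> 0. \<phi> U y) = 1"
proof -
  have "{U. \<phi> U y \<noteq> 0} = {U \<in> \<U>. \<phi> U y \<noteq> 0}"
    using pou_nonzero_imp_member(1)[OF assms] by blast
  then show "finite {U. \<phi> U y \<noteq> 0}" and "(\<Sum>U | \<phi> U y \<noteq> 0. \<phi> U y) = 1"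
    using assms unfolding pou_subordinate_def by auto
qed

lemma pou_continuous:
  assumes "pou_subordinate (top_of_set S) \<U> U0 x0 \<phi>"
  shows "continuous_map (top_of_set S) euclideanreal (\<phi> U)"
proof (cases "U \<in> \<U>")
  case True
  with assms show ?thesis
    unfolding pou_subordinate_def by blast
next
  case False
  with assms have "\<forall>x\<in>S. \<phi> U x = 0"
    unfolding pou_subordinate_def by auto
  then show ?thesis
    by (intro continuous_map_eq[OF continuous_map_const[THEN iffD2]]) auto
qed

lemma pou_supports_near_point:
  assumes lf: "lf_open_cover (top_of_set S) \<U>"
    and pou: "pou_subordinate (top_of_set S) \<U> U0 x0 \<phi>" and "x \<in> S"
  shows "\<exists>r>0. \<forall>y\<in>S. dist x y < r \<longrightarrow> (\<forall>U. \<phi> U y \<noteq> 0 \<longrightarrow> x \<in> U)"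
proof -
  let ?X = "top_of_set S"
  define C where "C U = ?X closure_of {y \<in> topspace ?X. \<phi> U y \<noteq> 0}" for U
  have "\<forall>x\<in>topspace ?X. \<exists>V. openin ?X V \<and> x \<in> V \<and> finite {U \<in> \<U>. U \<inter> V \<noteq> {}}"
    using lf unfolding lf_open_cover_def locally_finite_in_def by blast
  then obtain V where V: "openin ?X V" "x \<in> V" "finite {U \<in> \<U>. U \<inter> V \<noteq> {}}"
    using \<open>x \<in> S\<close> by auto
  \<comment> \<open>Only finitely many members of the cover meet V, so removing the closed supports
    that miss x leaves a neighbourhood of x.\<close>
  define F where "F = {U \<in> \<U>. U \<inter> V \<noteq> {} \<and> x \<notin> C U}"
  have "finite F"
    using V(3) unfolding F_def by (rule finite_subset[rotated]) auto
  then have "closedin ?X (\<Union>(C ` F))"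
    by (intro closedin_Union) (auto simp: C_def)
  then have "openin ?X (V - \<Union>(C ` F))"
    by (rule openin_diff[OF V(1)])
  moreover have "x \<in> V - \<Union>(C ` F)"
    using V(2) unfolding F_def by blast
  ultimately obtain r where "r > 0" and r: "ball x r \<inter> S \<subseteq> V - \<Union>(C ` F)"
    unfolding openin_contains_ball by blast
  show ?thesis
  proof (intro exI[of _ r] conjI ballI allI impI)
    fix y U assume "y \<in> S" "dist x y < r" "\<phi> U y \<noteq> 0"
    then have yVF: "y \<in> V - \<Union>(C ` F)"
      using r by auto
    have U: "U \<in> \<U>" and "y \<in> U"
      using pou_nonzero_imp_member[OF pou \<open>y \<in> S\<close> \<open>\<phi> U y \<noteq> 0\<close>] by auto
    have CU: "C U \<subseteq> U"
      using pou U unfolding pou_subordinate_def C_def by blast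
    have "y \<in> C U"
      unfolding C_def using \<open>y \<in> S\<close> \<open>\<phi> U y \<noteq> 0\<close> by (intro closure_of_subset[THEN subsetD]) auto
    have "x \<in> C U"
    proof (rule ccontr)
      assume "x \<notin> C U"
      with U \<open>y \<in> U\<close> yVF have "U \<in> F"
        unfolding F_def by blast
      with yVF \<open>y \<in> C U\<close> show False by blast
    qed
    with CU show "x \<in> U" by blast
  qed (rule \<open>r > 0\<close>)
qed

lemma pou_lebesgue_number:
  assumes "compact S" and lf: "lf_open_cover (top_of_set S) \<U>"
    and pou: "pou_subordinate (top_of_set S) \<U> U0 x0 \<phi>"
  shows "\<exists>\<delta>>0. \<forall>y\<in>S. \<forall>z\<in>S. dist y z < \<delta> \<longrightarrow> \<Inter>{U. \<phi> U y \<noteq> 0 \<or> \<phi> U z \<noteq> 0} \<noteq> {}"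
proof -
  have "\<forall>x\<in>S. \<exists>r>0. \<forall>y\<in>S. dist x y < r \<longrightarrow> (\<forall>U. \<phi> U y \<noteq> 0 \<longrightarrow> x \<in> U)"
    using pou_supports_near_point[OF lf pou] by blast
  then obtain r where r: "\<forall>x\<in>S. r x > 0 \<and> (\<forall>y\<in>S. dist x y < r x \<longrightarrow> (\<forall>U. \<phi> U y \<noteq> 0 \<longrightarrow> x \<in> U))"
    by (rule bchoice[THEN exE]) blast
  have cover: "S \<subseteq> \<Union>((\<lambda>x. ball x (r x)) ` S)"
    using r by (meson UN_I centre_in_ball subsetI)
  obtain \<delta> where "\<delta> > 0" and \<delta>: "\<And>y. y \<in> S \<Longrightarrow> \<exists>G \<in> (\<lambda>x. ball x (r x)) ` S. ball y \<delta> \<subseteq> G"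
    using Heine_Borel_lemma[OF \<open>compact S\<close> cover] by auto
  show ?thesis
  proof (intro exI[of _ \<delta>] conjI ballI impI)
    fix y z assume "y \<in> S" "z \<in> S" "dist y z < \<delta>"
    obtain x where "x \<in> S" and "ball y \<delta> \<subseteq> ball x (r x)"
      using \<delta>[OF \<open>y \<in> S\<close>] by blast
    moreover have "y \<in> ball y \<delta>" "z \<in> ball y \<delta>"
      using \<open>\<delta> > 0\<close> \<open>dist y z < \<delta>\<close> by auto
    ultimately have "dist x y < r x" "dist x z < r x"
      by (metis mem_ball subsetD)+
    with r \<open>x \<in> S\<close> \<open>y \<in> S\<close> \<open>z \<in> S\<close> have "x \<in> \<Inter>{U. \<phi> U y \<noteq> 0 \<or> \<phi> U z \<noteq> 0}"
      by blast
    then show "\<Inter>{U. \<phi> U y \<noteq> 0 \<or> \<phi> U z \<noteq> 0} \<noteq> {}"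
      by blast
  qed (rule \<open>\<delta> > 0\<close>)
qed

lemma canonical_map_in_nerve:
  assumes "pou_subordinate (top_of_set S) \<U> U0 x0 \<phi>" and "y \<in> S"
  shows "canonical_map \<phi> y \<in> nerve_realization \<U>"
  unfolding nerve_realization_def canonical_map_def mem_Collect_eq
proof (intro conjI allI impI)
  show "0 \<le> \<phi> U y" and "\<phi> U y \<noteq> 0 \<Longrightarrow> U \<in> \<U>" for U
    using pou_nonneg[OF assms] pou_nonzero_imp_member(1)[OF assms] by auto
  show "finite {U. \<phi> U y \<noteq> 0}" and "(\<Sum>U | \<phi> U y \<noteq> 0. \<phi> U y) = 1"
    using pou_finite_support_sum[OF assms] by auto
  have "y \<in> \<Inter>{U. \<phi> U y \<noteq> 0}"
    using pou_nonzero_imp_member(2)[OF assms] by blast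
  then show "\<Inter>{U. \<phi> U y \<noteq> 0} \<noteq> {}"
    by blast
qed

lemma canonical_map_continuous:
  assumes "pou_subordinate (top_of_set S) \<U> U0 x0 \<phi>"
  shows "continuous_map (top_of_set S) (nerve_top \<U>) (canonical_map \<phi>)"
  unfolding nerve_top_def continuous_map_in_subtopology
proof
  show "continuous_map (top_of_set S) euclidean (canonical_map \<phi>)"
    unfolding euclidean_product_topology[symmetric] continuous_map_componentwise_UNIV canonical_map_def
    using pou_continuous[OF assms] by simp
  show "canonical_map \<phi> \<in> topspace (top_of_set S) \<rightarrow> nerve_realization \<U>"
    using canonical_map_in_nerve[OF assms] by auto
qed

lemma canonical_map_basepoint:
  assumes pou: "pou_subordinate (top_of_set S) \<U> U0 x0 \<phi>" and "x0 \<in> S"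
  shows "canonical_map \<phi> x0 = nerve_vertex U0"
proof -
  let ?F = "{U. \<phi> U x0 \<noteq> 0}"
  have one: "\<phi> U0 x0 = 1"
    using pou unfolding pou_subordinate_def by blast
  have fin: "finite ?F" and "sum (\<lambda>U. \<phi> U x0) ?F = 1"
    using pou_finite_support_sum[OF assms] by auto
  with one have "sum (\<lambda>U. \<phi> U x0) (?F - {U0}) = 0"
    using sum.remove[OF fin, of U0 "\<lambda>U. \<phi> U x0"] by simp
  with fin pou_nonneg[OF assms] have "\<forall>U \<in> ?F - {U0}. \<phi> U x0 = 0"
    by (simp add: sum_nonneg_eq_0_iff)
  then show ?thesis
    by (auto simp: fun_eq_iff canonical_map_def nerve_vertex_def one)
qed

lemma nerve_realization_segment:
  assumes f: "f \<in> nerve_realization \<U>" and g: "g \<in> nerve_realization \<U>"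
    and common: "\<Inter>{U. f U \<noteq> 0 \<or> g U \<noteq> 0} \<noteq> {}" and "0 \<le> s" "s \<le> 1"
  shows "(\<lambda>U. (1 - s) * f U + s * g U) \<in> nerve_realization \<U>"
proof -
  define h where "h U = (1 - s) * f U + s * g U" for U
  define F where "F = {U. f U \<noteq> 0 \<or> g U \<noteq> 0}"
  have "F = {U. f U \<noteq> 0} \<union> {U. g U \<noteq> 0}"
    by (auto simp: F_def)
  then have fin: "finite F"
    using f g unfolding nerve_realization_def by simp
  have supp: "{U. h U \<noteq> 0} \<subseteq> F"
    by (auto simp: h_def F_def)
  have "sum f F = sum f {U. f U \<noteq> 0}" "sum g F = sum g {U. g U \<noteq> 0}"
    using fin by (auto intro!: sum.mono_neutral_right simp: F_def)
  then have f1: "sum f F = 1" and g1: "sum g F = 1"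
    using f g unfolding nerve_realization_def by auto
  have "sum h {U. h U \<noteq> 0} = sum h F"
    by (rule sum.mono_neutral_left[OF fin supp]) simp
  also have "\<dots> = (1 - s) * sum f F + s * sum g F"
    by (simp add: h_def sum.distrib sum_distrib_left)
  finally have "sum h {U. h U \<noteq> 0} = 1"
    by (simp add: f1 g1)
  moreover have "\<Inter>{U. h U \<noteq> 0} \<noteq> {}"
    using common Inter_anti_mono[OF supp] unfolding F_def by auto
  moreover have "finite {U. h U \<noteq> 0}"
    using fin supp by (rule finite_subset[rotated])
  moreover have "0 \<le> h U" for U
    using f g \<open>0 \<le> s\<close> \<open>s \<le> 1\<close> unfolding nerve_realization_def h_def by simp
  moreover have "h U \<noteq> 0 \<Longrightarrow> U \<in> \<U>" for U
    using f g supp unfolding nerve_realization_def F_def by blast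
  ultimately show ?thesis
    unfolding nerve_realization_def h_def[symmetric] by blast
qed

lemma Omega_nD:
  assumes "\<alpha> \<in> Omega_n X x0"
  shows "continuous_map (top_of_set ucube) X \<alpha>" and "\<And>t. t \<notin> box 0 1 \<Longrightarrow> \<alpha> t = x0"
  using assms unfolding Omega_n_def by auto

lemma Omega_n_in_space:
  assumes "\<alpha> \<in> Omega_n (top_of_set S) x0" and "x0 \<in> S"
  shows "\<alpha> t \<in> S"
proof (cases "t \<in> box 0 1")
  case True
  then have "t \<in> ucube"
    unfolding ucube_def using box_subset_cbox by blast
  moreover have "\<alpha> ` ucube \<subseteq> S"
    using continuous_map_image_subset_topspace[OF Omega_nD(1)[OF assms(1)]] by simp
  ultimately show ?thesis
    by blast
next
  case False
  then show ?thesis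
    using Omega_nD(2)[OF assms(1)] \<open>x0 \<in> S\<close> by simp
qed

lemma Omega_n_compose:
  assumes "continuous_map X Y f" and "f x0 = y0" and "\<alpha> \<in> Omega_n X x0"
  shows "f \<circ> \<alpha> \<in> Omega_n Y y0"
  using continuous_map_compose[OF Omega_nD(1)[OF assms(3)] assms(1)] Omega_nD(2)[OF assms(3)] assms(2)
  unfolding Omega_n_def by simp

lemma hrel_refl:
  assumes "\<alpha> \<in> Omega_n X x0"
  shows "hrel X x0 \<alpha> \<alpha>"
  using Omega_nD[OF assms] unfolding hrel_def ucube_bd_def by simp

lemma hrel_sym: "hrel X x0 \<alpha> \<beta> \<Longrightarrow> hrel X x0 \<beta> \<alpha>"
  unfolding hrel_def by (rule homotopic_with_symD)

lemma hrel_trans: "hrel X x0 \<alpha> \<beta> \<Longrightarrow> hrel X x0 \<beta> \<gamma> \<Longrightarrow> hrel X x0 \<alpha> \<gamma>"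
  unfolding hrel_def by (rule homotopic_with_trans)

lemma hrel_compose:
  assumes "continuous_map X Y f" and "f x0 = y0" and "hrel X x0 \<alpha> \<beta>"
  shows "hrel Y y0 (f \<circ> \<alpha>) (f \<circ> \<beta>)"
  using assms(3) unfolding hrel_def
  by (rule homotopic_with_compose_continuous_map_left[OF _ assms(1)]) (simp add: assms(2))

lemma hclass_eq: "hrel X x0 \<alpha> \<beta> \<Longrightarrow> hclass X x0 \<alpha> = hclass X x0 \<beta>"
  unfolding hclass_def by (metis hrel_sym hrel_trans)

lemma homotopy_group_memD:
  assumes "a \<in> homotopy_group X x0" and "\<alpha> \<in> a"
  shows "\<alpha> \<in> Omega_n X x0" and "a = hclass X x0 \<alpha>"
proof -
  obtain \<gamma> where a: "a = hclass X x0 \<gamma>"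
    using assms(1) unfolding homotopy_group_def by blast
  with assms(2) show "\<alpha> \<in> Omega_n X x0"
    unfolding hclass_def by simp
  from a assms(2) have "hrel X x0 \<gamma> \<alpha>"
    unfolding hclass_def by simp
  with a show "a = hclass X x0 \<alpha>"
    by (simp add: hclass_eq)
qed

lemma homotopy_group_nonempty:
  assumes "a \<in> homotopy_group X x0"
  shows "a \<noteq> {}"
proof -
  obtain \<gamma> where "\<gamma> \<in> Omega_n X x0" and "a = hclass X x0 \<gamma>"
    using assms unfolding homotopy_group_def by blast
  then have "\<gamma> \<in> a"
    unfolding hclass_def by (simp add: hrel_refl)
  then show ?thesis
    by blast
qed

lemma induced_hom_eq_hclass:
  assumes "continuous_map X Y f" and "f x0 = y0"
    and a: "a \<in> homotopy_group X x0" and "\<alpha> \<in> a"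
  shows "induced_hom f Y y0 a = hclass Y y0 (f \<circ> \<alpha>)"
proof -
  define \<alpha>' where "\<alpha>' = (SOME \<alpha>. \<alpha> \<in> a)"
  have "\<alpha>' \<in> a"
    unfolding \<alpha>'_def using homotopy_group_nonempty[OF a] by (simp add: some_in_eq)
  then have "hrel X x0 \<alpha> \<alpha>'"
    using homotopy_group_memD(2)[OF a \<open>\<alpha> \<in> a\<close>] unfolding hclass_def by simp
  then have "hrel Y y0 (f \<circ> \<alpha>) (f \<circ> \<alpha>')"
    by (rule hrel_compose[OF assms(1,2)])
  then show ?thesis
    unfolding induced_hom_def \<alpha>'_def[symmetric] by (simp add: hclass_eq)
qed

lemma hrel_straight_line:
  fixes \<gamma>1 \<gamma>2 :: "real^'n \<Rightarrow> 'b \<Rightarrow> real"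
  assumes \<gamma>1: "\<gamma>1 \<in> Omega_n (top_of_set N) v" and \<gamma>2: "\<gamma>2 \<in> Omega_n (top_of_set N) v"
    and segment: "\<And>s t. s \<in> {0..1} \<Longrightarrow> t \<in> ucube \<Longrightarrow> (\<lambda>i. (1 - s) * \<gamma>1 t i + s * \<gamma>2 t i) \<in> N"
  shows "hrel (top_of_set N) v \<gamma>1 \<gamma>2"
proof -
  let ?T = "prod_topology (top_of_set {0..1::real}) (top_of_set (ucube :: (real^'n) set))"
  define h where "h = (\<lambda>w i. (1 - fst w) * \<gamma>1 (snd w) i + fst w * \<gamma>2 (snd w) i)"
  have coord: "continuous_map ?T euclideanreal (\<lambda>w. \<gamma> (snd w) i)"
    if "\<gamma> \<in> Omega_n (top_of_set N) v" for \<gamma> :: "real^'n \<Rightarrow> 'b \<Rightarrow> real" and i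
  proof -
    have "continuous_map (top_of_set ucube) euclidean \<gamma>"
      using Omega_nD(1)[OF that] continuous_map_in_subtopology by blast
    then have "continuous_map (top_of_set ucube) euclideanreal (\<lambda>t. \<gamma> t i)"
      unfolding euclidean_product_topology[symmetric] continuous_map_componentwise_UNIV by blast
    then show ?thesis
      using continuous_map_compose[OF continuous_map_snd] unfolding o_def by blast
  qed
  have "continuous_map ?T euclideanreal fst"
    using continuous_map_into_fulltopology[OF continuous_map_fst] .
  then have "continuous_map ?T euclidean h"
    unfolding euclidean_product_topology[symmetric] continuous_map_componentwise_UNIV h_def
    by (intro allI continuous_map_add continuous_map_real_mult continuous_map_diff
        continuous_map_const[THEN iffD2] coord \<gamma>1 \<gamma>2) auto
  moreover have "h \<in> topspace ?T \<rightarrow> N"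
    using segment by (auto simp: h_def)
  moreover have "h (s, t) = v" if "t \<in> ucube_bd" for s t
    using that Omega_nD(2)[OF \<gamma>1] Omega_nD(2)[OF \<gamma>2]
    by (auto simp: h_def ucube_bd_def fun_eq_iff algebra_simps)
  ultimately show ?thesis
    unfolding hrel_def homotopic_with_def
    by (intro exI[of _ h]) (auto simp: continuous_map_in_subtopology h_def)
qed

lemma umetric_ge_dist:
  assumes "bounded S" and "\<And>t. \<alpha> t \<in> S" and "\<And>t. \<beta> t \<in> S" and "t \<in> ucube"
  shows "dist (\<alpha> t) (\<beta> t) \<le> umetric \<alpha> \<beta>"
proof -
  have "bdd_above ((\<lambda>t. dist (\<alpha> t) (\<beta> t)) ` ucube)"
    by (rule bdd_aboveI2[where M = "diameter S"]) (rule diameter_bounded_bound[OF assms(1-3)])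
  then show ?thesis
    unfolding umetric_def by (rule cSup_upper[OF imageI[OF \<open>t \<in> ucube\<close>]])
qed

lemma rho_less_close_representatives:
  assumes "compact S" and "x0 \<in> S"
    and a: "a \<in> homotopy_group (top_of_set S) x0" and b: "b \<in> homotopy_group (top_of_set S) x0"
    and "rho a b < \<delta>"
  shows "\<exists>\<alpha>\<in>a. \<exists>\<beta>\<in>b. \<forall>t\<in>ucube. dist (\<alpha> t) (\<beta> t) < \<delta>"
proof -
  let ?M = "{umetric \<alpha> \<beta> | \<alpha> \<beta>. \<alpha> \<in> a \<and> \<beta> \<in> b}"
  have "?M \<noteq> {}"
    using homotopy_group_nonempty[OF a] homotopy_group_nonempty[OF b] by blast
  then obtain \<alpha> \<beta> where "\<alpha> \<in> a" "\<beta> \<in> b" and "umetric \<alpha> \<beta> < \<delta>"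
    using cInf_lessD[of ?M \<delta>] \<open>rho a b < \<delta>\<close> unfolding rho_def by blast
  moreover have "dist (\<alpha> t) (\<beta> t) \<le> umetric \<alpha> \<beta>" if "t \<in> ucube" for t
  proof (rule umetric_ge_dist[OF compact_imp_bounded[OF \<open>compact S\<close>] _ _ that])
    show "\<alpha> t \<in> S" "\<beta> t \<in> S" for t
      using homotopy_group_memD(1)[OF a \<open>\<alpha> \<in> a\<close>] homotopy_group_memD(1)[OF b \<open>\<beta> \<in> b\<close>]
        Omega_n_in_space \<open>x0 \<in> S\<close> by blast+
  qed
  ultimately show ?thesis
    by (meson le_less_trans)
qed

lemma induced_hom_canonical_map_locally_constant:
  fixes S :: "'a::metric_space set"
  assumes "compact S" and "x0 \<in> S" and lf: "lf_open_cover (top_of_set S) \<U>"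
    and pou: "pou_subordinate (top_of_set S) \<U> U0 x0 \<phi>"
  shows "\<exists>\<delta>>0. \<forall>a\<in>(homotopy_group (top_of_set S) x0 :: (real^'n \<Rightarrow> 'a) set set).
           \<forall>b\<in>homotopy_group (top_of_set S) x0. rho a b < \<delta> \<longrightarrow>
             induced_hom (canonical_map \<phi>) (nerve_top \<U>) (nerve_vertex U0) b =
             induced_hom (canonical_map \<phi>) (nerve_top \<U>) (nerve_vertex U0) a"
proof -
  let ?p = "canonical_map \<phi>" and ?N = "nerve_top \<U>" and ?v = "nerve_vertex U0"
  obtain \<delta> where "\<delta> > 0" and common:
    "\<forall>y\<in>S. \<forall>z\<in>S. dist y z < \<delta> \<longrightarrow> \<Inter>{U. \<phi> U y \<noteq> 0 \<or> \<phi> U z \<noteq> 0} \<noteq> {}"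
    using pou_lebesgue_number[OF \<open>compact S\<close> lf pou] by blast
  have p: "continuous_map (top_of_set S) ?N ?p" "?p x0 = ?v"
    using canonical_map_continuous[OF pou] canonical_map_basepoint[OF pou \<open>x0 \<in> S\<close>] .
  have same_image: "induced_hom ?p ?N ?v b = induced_hom ?p ?N ?v a"
    if a: "a \<in> homotopy_group (top_of_set S) x0" and b: "b \<in> homotopy_group (top_of_set S) x0"
      and "rho a b < \<delta>" for a b :: "(real^'n \<Rightarrow> 'a) set"
  proof -
    obtain \<alpha> \<beta> where "\<alpha> \<in> a" "\<beta> \<in> b" and close: "\<forall>t\<in>ucube. dist (\<alpha> t) (\<beta> t) < \<delta>"
      using rho_less_close_representatives[OF \<open>compact S\<close> \<open>x0 \<in> S\<close> a b \<open>rho a b < \<delta>\<close>] by blast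
    have \<alpha>: "\<alpha> \<in> Omega_n (top_of_set S) x0" and \<beta>: "\<beta> \<in> Omega_n (top_of_set S) x0"
      using homotopy_group_memD(1)[OF a \<open>\<alpha> \<in> a\<close>] homotopy_group_memD(1)[OF b \<open>\<beta> \<in> b\<close>] .
    have "hrel ?N ?v (?p \<circ> \<alpha>) (?p \<circ> \<beta>)"
      unfolding nerve_top_def
    proof (rule hrel_straight_line)
      show "?p \<circ> \<alpha> \<in> Omega_n (top_of_set (nerve_realization \<U>)) ?v"
           "?p \<circ> \<beta> \<in> Omega_n (top_of_set (nerve_realization \<U>)) ?v"
        using Omega_n_compose[OF p] \<alpha> \<beta> unfolding nerve_top_def by auto
      fix s :: real and t :: "real^'n"
      assume "s \<in> {0..1}" "t \<in> ucube"
      have "\<alpha> t \<in> S" "\<beta> t \<in> S"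
        using Omega_n_in_space \<alpha> \<beta> \<open>x0 \<in> S\<close> by auto
      then have "\<Inter>{U. ?p (\<alpha> t) U \<noteq> 0 \<or> ?p (\<beta> t) U \<noteq> 0} \<noteq> {}"
        using common close \<open>t \<in> ucube\<close> unfolding canonical_map_def by blast
      moreover have "0 \<le> s" "s \<le> 1"
        using \<open>s \<in> {0..1}\<close> by auto
      ultimately have "(\<lambda>U. (1 - s) * ?p (\<alpha> t) U + s * ?p (\<beta> t) U) \<in> nerve_realization \<U>"
        by (intro nerve_realization_segment canonical_map_in_nerve[OF pou] \<open>\<alpha> t \<in> S\<close> \<open>\<beta> t \<in> S\<close>)
      then show "(\<lambda>U. (1 - s) * (?p \<circ> \<alpha>) t U + s * (?p \<circ> \<beta>) t U) \<in> nerve_realization \<U>"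
        by simp
    qed
    then have "hclass ?N ?v (?p \<circ> \<alpha>) = hclass ?N ?v (?p \<circ> \<beta>)"
      by (rule hclass_eq)
    then show ?thesis
      using induced_hom_eq_hclass[OF p a \<open>\<alpha> \<in> a\<close>] induced_hom_eq_hclass[OF p b \<open>\<beta> \<in> b\<close>] by simp
  qed
  show ?thesis
    using \<open>\<delta> > 0\<close> same_image by (intro exI[of _ \<delta>]) simp
qed

lemma rho_open_Int:
  assumes "rho_open S x0 A" and "rho_open S x0 B"
  shows "rho_open S x0 (A \<inter> B)"
  unfolding rho_open_def
proof (intro conjI ballI)
  show "A \<inter> B \<subseteq> homotopy_group (top_of_set S) x0"
    using assms unfolding rho_open_def by blast
  fix a assume "a \<in> A \<inter> B"
  then obtain e1 e2 where "e1 > 0" "e2 > 0"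
    and "\<forall>b\<in>homotopy_group (top_of_set S) x0. rho a b < e1 \<longrightarrow> b \<in> A"
    and "\<forall>b\<in>homotopy_group (top_of_set S) x0. rho a b < e2 \<longrightarrow> b \<in> B"
    using assms unfolding rho_open_def by blast
  then show "\<exists>e>0. \<forall>b\<in>homotopy_group (top_of_set S) x0. rho a b < e \<longrightarrow> b \<in> A \<inter> B"
    by (intro exI[of _ "min e1 e2"]) auto
qed

lemma rho_open_Union:
  "(\<And>A. A \<in> \<A> \<Longrightarrow> rho_open S x0 A) \<Longrightarrow> rho_open S x0 (\<Union>\<A>)"
  unfolding rho_open_def by blast

lemma rho_open_fibre:
  assumes "\<exists>\<delta>>0. \<forall>a\<in>homotopy_group (top_of_set S) x0. \<forall>b\<in>homotopy_group (top_of_set S) x0.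
             rho a b < \<delta> \<longrightarrow> g b = g a"
  shows "rho_open S x0 {b \<in> homotopy_group (top_of_set S) x0. g b = g c}"
  using assms unfolding rho_open_def by fastforce

lemma rho_open_if_generated:
  assumes "generate_topology_on \<B> A" and "\<And>B. B \<in> \<B> \<Longrightarrow> rho_open S x0 B"
  shows "rho_open S x0 A"
  using assms
proof (induction rule: generate_topology_on.induct)
  case Empty
  show ?case
    using rho_open_Union[of "{}"] by simp
qed (auto intro: rho_open_Int rho_open_Union)

theorem proposition5p2:
  fixes S :: "'a::metric_space set" and x0 :: 'a
    and A :: "(real^'n \<Rightarrow> 'a) set set"
  assumes "compact S" and "path_connected S" and "x0 \<in> S"
    and "openin (shape_top (top_of_set S) x0) A"
  shows "rho_open S x0 A"
  using openin_topology_generated_by[OF assms(4)[unfolded shape_top_def]]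
  by (rule rho_open_if_generated)
    (blast intro: rho_open_fibre induced_hom_canonical_map_locally_constant assms(1,3))

end
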